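(* Let $(\Omega,\mathcal{F})$ be a measurable space, $\mathcal{P}$ a nonempty set of probability measures on it, $\hat{\mathbb{E}}[Z]=\sup_{P\in\mathcal{P}}E_P[Z]$, and let $X,Y,Z$ be random variables with $\hat{\mathbb{E}}[X^2]+\hat{\mathbb{E}}[Y^2]+\hat{\mathbb{E}}[Z^2]<\infty$. Then: (1) $\overline{C}(X,Y)=\overline{C}(Y,X)$ and $\underline{C}(X,Y)=\underline{C}(Y,X)$; (2) for all $a,b\in\mathbb{R}$, $\overline{C}(X+a,Y+b)=\overline{C}(X,Y)$ and $\underline{C}(X+a,Y+b)=\underline{C}(X,Y)$; (3) $\overline{C}(X+Y,Z)\le\overline{C}(X,Z)+\overline{C}(Y,Z)$; (4) $\underline{C}(X+Y,Z)\ge\underline{C}(X,Z)+\underline{C}(Y,Z)$; (5) for all $a,b\in\mathbb{R}$ with $ab\ge0$, $\overline{C}(aX,bY)=ab\,\overline{C}(X,Y)$ and $\underline{C}(aX,bY)=ab\,\underline{C}(X,Y)$; (6) for all $a,b\in\mathbb{R}$ with $ab\le 0$, $\overline{C}(aX,bY)=ab\,\underline{C}(X,Y)$; in particular $\underline{C}(X,Y)=-\overline{C}(-X,Y)=-\overline{C}(X,-Y)$.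
   Context: For a random variable $W$ with $\hat{\mathbb{E}}[W^2]<\infty$: $\overline{\mu}_W=\hat{\mathbb{E}}[W]$, $\underline{\mu}_W=-\hat{\mathbb{E}}[-W]$, $M_W=[\underline{\mu}_W,\overline{\mu}_W]$. Upper covariance: $\overline{C}(X,Y)=\max_{\mu_2\in M_Y}\min_{\mu_1\in M_X}\hat{\mathbb{E}}[(X-\mu_1)(Y-\mu_2)]$; lower covariance: $\underline{C}(X,Y)=\min_{\mu_2\in M_Y}\max_{\mu_1\in M_X}\left(-\hat{\mathbb{E}}[-(X-\mu_1)(Y-\mu_2)]\right)$. *)

theory Defs
  imports "HOL-Probability.Probability"
begin

definition sub_exp :: "'a measure set \<Rightarrow> ('a \<Rightarrow> real) \<Rightarrow> real" where
  "sub_exp Ps W = (SUP P\<in>Ps. integral\<^sup>L P W)"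

definition upper_mean :: "'a measure set \<Rightarrow> ('a \<Rightarrow> real) \<Rightarrow> real" where
  "upper_mean Ps W = sub_exp Ps W"

definition lower_mean :: "'a measure set \<Rightarrow> ('a \<Rightarrow> real) \<Rightarrow> real" where
  "lower_mean Ps W = - sub_exp Ps (\<lambda>\<omega>. - W \<omega>)"

definition mean_interval :: "'a measure set \<Rightarrow> ('a \<Rightarrow> real) \<Rightarrow> real set" where
  "mean_interval Ps W = {lower_mean Ps W .. upper_mean Ps W}"

definition upper_cov :: "'a measure set \<Rightarrow> ('a \<Rightarrow> real) \<Rightarrow> ('a \<Rightarrow> real) \<Rightarrow> real" where
  "upper_cov Ps X Y =
     (SUP m2\<in>mean_interval Ps Y. INF m1\<in>mean_interval Ps X.
        sub_exp Ps (\<lambda>\<omega>. (X \<omega> - m1) * (Y \<omega> - m2)))"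

definition lower_cov :: "'a measure set \<Rightarrow> ('a \<Rightarrow> real) \<Rightarrow> ('a \<Rightarrow> real) \<Rightarrow> real" where
  "lower_cov Ps X Y =
     (INF m2\<in>mean_interval Ps Y. SUP m1\<in>mean_interval Ps X.
        - sub_exp Ps (\<lambda>\<omega>. - ((X \<omega> - m1) * (Y \<omega> - m2))))"

end

theory Submission
  imports Defs
begin

text \<open>Call a finite convex combination \<open>l\<close> of the expectations \<open>E\<^sub>P\<close>, \<open>P \<in> Ps\<close>, a mixture and
  put \<open>cov\<^sub>l(X, Y) = l(X Y) - l(X) l(Y)\<close>. The upper covariance is the supremum, and the lower
  covariance the infimum, of \<open>cov\<^sub>l(X, Y)\<close> over all mixtures. Choosing \<open>mu2 = l(Y)\<close> gives
  \<open>l((X - mu1)(Y - mu2)) = cov\<^sub>l(X, Y)\<close> for every \<open>mu1\<close>, hence one inequality. For the other, fix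
  \<open>mu2\<close>: the maps \<open>mu1 \<mapsto> l((X - mu1)(Y - mu2))\<close> form a convex family of affine functions,
  each of which lies below \<open>C = sup\<^sub>l cov\<^sub>l(X, Y)\<close> at the point \<open>mu1 = l(X) \<in> M\<^sub>X\<close>; a
  one-dimensional minimax argument produces a single \<open>mu1 \<in> M\<^sub>X\<close> at which all of them, in
  particular all \<open>E\<^sub>P\<close>, lie below \<open>C\<close>. With this representation the six properties reduce to
  symmetry, bilinearity and shift invariance of \<open>cov\<^sub>l\<close>; a factor \<open>a b \<le> 0\<close> turns the
  supremum into an infimum.\<close>

lemma INF_real_eq_uminus_SUP: "(INF x\<in>A. f x) = - (SUP x\<in>A. - f x :: real)"
  by (simp add: Inf_real_def image_image)

lemma cSUP_mult_left_nonneg: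
  fixes f :: "'b \<Rightarrow> real"
  assumes "0 \<le> c" and "A \<noteq> {}" and "bdd_above (f ` A)"
  shows "(SUP x\<in>A. c * f x) = c * (SUP x\<in>A. f x)"
proof -
  have "mono ((*) c)" using assms(1) by (auto simp: mono_def mult_left_mono)
  then have "c * Sup (f ` A) = (SUP y\<in>f ` A. c * y)"
    using assms(2,3) by (intro continuous_at_Sup_mono) (auto intro: continuous_intros)
  then show ?thesis by (simp add: image_image)
qed

lemma cINF_mult_left_nonneg:
  fixes f :: "'b \<Rightarrow> real"
  assumes "0 \<le> c" and "A \<noteq> {}" and "bdd_below (f ` A)"
  shows "(INF x\<in>A. c * f x) = c * (INF x\<in>A. f x)"
proof -
  have "(SUP x\<in>A. c * - f x) = c * (SUP x\<in>A. - f x)"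
    using assms by (intro cSUP_mult_left_nonneg) (auto simp: bdd_above_uminus_image)
  then show ?thesis unfolding INF_real_eq_uminus_SUP[of f] INF_real_eq_uminus_SUP[of "\<lambda>x. c * f x"] by simp
qed

lemma square_le_of_mem_interval:
  fixes m :: real
  assumes "a \<le> m" and "m \<le> b"
  shows "m\<^sup>2 \<le> a\<^sup>2 + b\<^sup>2"
proof -
  have "\<bar>m\<bar> \<le> \<bar>a\<bar> \<or> \<bar>m\<bar> \<le> \<bar>b\<bar>" using assms by linarith
  then have "m\<^sup>2 \<le> a\<^sup>2 \<or> m\<^sup>2 \<le> b\<^sup>2" by (simp add: abs_le_square_iff)
  then show ?thesis by (metis add_increasing add_increasing2 zero_le_power2)
qed

lemma abs_le_one_plus_square: "\<bar>x::real\<bar> \<le> 1 + x\<^sup>2"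
  using sum_squares_bound[of "\<bar>x\<bar>" 1] by (simp add: power2_eq_square)

text \<open>The segment joining the two pairs contains a member of slope zero, which lies below \<open>C\<close>;
  this orders the roots of the decreasing and of the increasing member.\<close>
lemma convex_affine_family_root_le:
  fixes L :: "(real \<times> real) set"
  assumes "convex L" and flat_below: "\<And>\<alpha>. (\<alpha>, 0) \<in> L \<Longrightarrow> \<alpha> \<le> C"
    and 1: "(\<alpha>1, \<beta>1) \<in> L" "\<beta>1 < 0" and 2: "(\<alpha>2, \<beta>2) \<in> L" "\<beta>2 > 0"
  shows "(C - \<alpha>1) / \<beta>1 \<le> (C - \<alpha>2) / \<beta>2"
proof -
  have gap: "\<beta>2 - \<beta>1 > 0" using 1 2 by simp
  define u where "u = \<beta>2 / (\<beta>2 - \<beta>1)"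
  define v where "v = - \<beta>1 / (\<beta>2 - \<beta>1)"
  have "u *\<^sub>R (\<alpha>1, \<beta>1) + v *\<^sub>R (\<alpha>2, \<beta>2) \<in> L"
    using 1 2 gap by (intro convexD[OF \<open>convex L\<close>])
      (simp_all add: u_def v_def diff_divide_distrib[symmetric] divide_nonpos_pos)
  moreover have "u * \<beta>1 + v * \<beta>2 = 0" using gap by (simp add: u_def v_def field_simps)
  ultimately have "u * \<alpha>1 + v * \<alpha>2 \<le> C" using flat_below by simp
  moreover have "u * \<alpha>1 + v * \<alpha>2 = (\<beta>2 * \<alpha>1 - \<beta>1 * \<alpha>2) / (\<beta>2 - \<beta>1)"
    by (simp add: u_def v_def diff_divide_distrib)
  ultimately have "\<beta>2 * \<alpha>1 - \<beta>1 * \<alpha>2 \<le> C * (\<beta>2 - \<beta>1)"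
    using gap by (simp add: pos_divide_le_eq)
  then show ?thesis using 1 2 by (simp add: field_simps)
qed

lemma convex_affine_family_common_point:
  fixes L :: "(real \<times> real) set" and a b C :: real
  assumes "convex L" and "a \<le> b"
    and somewhere: "\<And>\<alpha> \<beta>. (\<alpha>, \<beta>) \<in> L \<Longrightarrow> \<exists>x\<in>{a..b}. \<alpha> + \<beta> * x \<le> C"
  shows "\<exists>s\<in>{a..b}. \<forall>(\<alpha>, \<beta>)\<in>L. \<alpha> + \<beta> * s \<le> C"
proof -
  define root where "root \<alpha> \<beta> = (C - \<alpha>) / \<beta>" for \<alpha> \<beta> :: real
  have below_iff_neg: "\<alpha> + \<beta> * s \<le> C \<longleftrightarrow> root \<alpha> \<beta> \<le> s" if "\<beta> < 0" for \<alpha> \<beta> s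
    using that by (auto simp: root_def neg_divide_le_eq algebra_simps)
  have below_iff_pos: "\<alpha> + \<beta> * s \<le> C \<longleftrightarrow> s \<le> root \<alpha> \<beta>" if "\<beta> > 0" for \<alpha> \<beta> s
    using that by (auto simp: root_def pos_le_divide_eq algebra_simps)
  have root_le_b: "root \<alpha> \<beta> \<le> b" if "(\<alpha>, \<beta>) \<in> L" "\<beta> < 0" for \<alpha> \<beta>
    using somewhere[OF that(1)] below_iff_neg[OF that(2)] by force
  have a_le_root: "a \<le> root \<alpha> \<beta>" if "(\<alpha>, \<beta>) \<in> L" "\<beta> > 0" for \<alpha> \<beta>
    using somewhere[OF that(1)] below_iff_pos[OF that(2)] by force
  have flat_below: "\<alpha> \<le> C" if "(\<alpha>, 0) \<in> L" for \<alpha>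
    using somewhere[OF that] by auto
  define s where "s = Sup (insert a {root \<alpha> \<beta> | \<alpha> \<beta>. (\<alpha>, \<beta>) \<in> L \<and> \<beta> < 0})"
  have bdd: "bdd_above (insert a {root \<alpha> \<beta> | \<alpha> \<beta>. (\<alpha>, \<beta>) \<in> L \<and> \<beta> < 0})"
    using \<open>a \<le> b\<close> root_le_b by (auto simp: bdd_above_def)
  have "a \<le> s" unfolding s_def using bdd by (intro cSup_upper) auto
  moreover have "s \<le> b" unfolding s_def using \<open>a \<le> b\<close> root_le_b by (intro cSup_least) auto
  moreover have "\<alpha> + \<beta> * s \<le> C" if "(\<alpha>, \<beta>) \<in> L" for \<alpha> \<beta>
  proof (cases \<beta> "0::real" rule: linorder_cases)
    case less
    then have "root \<alpha> \<beta> \<le> s" unfolding s_def using bdd that by (intro cSup_upper) auto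
    then show ?thesis using below_iff_neg[OF less] by simp
  next
    case equal
    then show ?thesis using flat_below that by simp
  next
    case greater
    have "s \<le> root \<alpha> \<beta>"
      unfolding s_def
      using a_le_root[OF that greater] convex_affine_family_root_le[OF \<open>convex L\<close> flat_below _ _ that greater]
      by (intro cSup_least) (auto simp: root_def)
    then show ?thesis using below_iff_pos[OF greater] by simp
  qed
  ultimately show ?thesis by fastforce
qed

lemma lower_cov_eq_uminus_upper_cov: "lower_cov Ps X Y = - upper_cov Ps (\<lambda>\<omega>. - X \<omega>) Y"
proof -
  have interval: "mean_interval Ps (\<lambda>\<omega>. - X \<omega>) = uminus ` mean_interval Ps X"
    unfolding mean_interval_def lower_mean_def upper_mean_def image_uminus_atLeastAtMost by simp
  have integrand: "(\<lambda>\<omega>. (- X \<omega> - - m1) * (Y \<omega> - m2)) = (\<lambda>\<omega>. - ((X \<omega> - m1) * (Y \<omega> - m2)))"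
    for m1 m2
    by (rule ext) (simp add: algebra_simps)
  show ?thesis
    unfolding lower_cov_def upper_cov_def interval image_image integrand
      INF_real_eq_uminus_SUP[of _ "mean_interval Ps Y"]
    by (simp add: INF_real_eq_uminus_SUP)
qed

definition uniformly_L2 :: "'a measure set \<Rightarrow> ('a \<Rightarrow> real) \<Rightarrow> bool" where
  "uniformly_L2 Ps X \<longleftrightarrow> (\<forall>P\<in>Ps. X \<in> borel_measurable P \<and> integrable P (\<lambda>\<omega>. (X \<omega>)\<^sup>2))
     \<and> bdd_above ((\<lambda>P. \<integral>\<omega>. (X \<omega>)\<^sup>2 \<partial>P) ` Ps)"

inductive_set mixtures :: "'a measure set \<Rightarrow> (('a \<Rightarrow> real) \<Rightarrow> real) set" for Ps where
  expectation: "P \<in> Ps \<Longrightarrow> (\<lambda>W. \<integral>\<omega>. W \<omega> \<partial>P) \<in> mixtures Ps"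
| mix: "l1 \<in> mixtures Ps \<Longrightarrow> l2 \<in> mixtures Ps \<Longrightarrow> 0 \<le> t \<Longrightarrow> t \<le> 1 \<Longrightarrow>
     (\<lambda>W. t * l1 W + (1 - t) * l2 W) \<in> mixtures Ps"

definition mixture_cov :: "(('a \<Rightarrow> real) \<Rightarrow> real) \<Rightarrow> ('a \<Rightarrow> real) \<Rightarrow> ('a \<Rightarrow> real) \<Rightarrow> real" where
  "mixture_cov l X Y = l (\<lambda>\<omega>. X \<omega> * Y \<omega>) - l X * l Y"

lemma convex_image_mixtures:
  fixes f :: "(('a \<Rightarrow> real) \<Rightarrow> real) \<Rightarrow> 'b::real_vector"
  assumes affine: "\<And>l1 l2 t. l1 \<in> mixtures Ps \<Longrightarrow> l2 \<in> mixtures Ps \<Longrightarrow> 0 \<le> t \<Longrightarrow> t \<le> 1 \<Longrightarrow>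
    f (\<lambda>W. t * l1 W + (1 - t) * l2 W) = t *\<^sub>R f l1 + (1 - t) *\<^sub>R f l2"
  shows "convex (f ` mixtures Ps)"
proof (rule convexI)
  fix p q :: 'b and u v :: real
  assume "p \<in> f ` mixtures Ps" "q \<in> f ` mixtures Ps" and u: "0 \<le> u" "0 \<le> v" "u + v = 1"
  then obtain l1 l2 where l1: "l1 \<in> mixtures Ps" and l2: "l2 \<in> mixtures Ps" and "p = f l1" "q = f l2"
    by auto
  moreover have "v = 1 - u" using u by simp
  moreover have mix: "(\<lambda>W. u * l1 W + (1 - u) * l2 W) \<in> mixtures Ps"
    using l1 l2 u by (intro mixtures.mix) auto
  ultimately show "u *\<^sub>R p + v *\<^sub>R q \<in> f ` mixtures Ps"
    using affine[OF l1 l2] u by (intro rev_image_eqI[OF mix]) simp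
qed

lemma mixture_cov_commute: "mixture_cov l X Y = mixture_cov l Y X"
  unfolding mixture_cov_def by (simp add: mult.commute)

lemma uniformly_L2_of_bounded_second_moments:
  assumes Ps: "\<forall>P\<in>Ps. sets P = sets M" and X: "X \<in> borel_measurable M"
    and finite: "(SUP P\<in>Ps. \<integral>\<^sup>+\<omega>. ennreal ((X \<omega>)\<^sup>2) \<partial>P) < \<infinity>"
  shows "uniformly_L2 Ps X"
proof -
  let ?S = "SUP P\<in>Ps. \<integral>\<^sup>+\<omega>. ennreal ((X \<omega>)\<^sup>2) \<partial>P"
  have "X \<in> borel_measurable P \<and> integrable P (\<lambda>\<omega>. (X \<omega>)\<^sup>2) \<and> (\<integral>\<omega>. (X \<omega>)\<^sup>2 \<partial>P) \<le> enn2real ?S"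
    if P: "P \<in> Ps" for P
  proof -
    have X_measurable: "X \<in> borel_measurable P" using X Ps P measurable_cong_sets by blast
    have le_S: "(\<integral>\<^sup>+\<omega>. ennreal ((X \<omega>)\<^sup>2) \<partial>P) \<le> ?S" using P by (rule SUP_upper)
    have "integrable P (\<lambda>\<omega>. (X \<omega>)\<^sup>2)"
      using X_measurable le_S finite by (intro integrableI_bounded) auto
    moreover have "(\<integral>\<omega>. (X \<omega>)\<^sup>2 \<partial>P) = enn2real (\<integral>\<^sup>+\<omega>. ennreal ((X \<omega>)\<^sup>2) \<partial>P)"
      using X_measurable by (intro integral_eq_nn_integral) auto
    ultimately show ?thesis using X_measurable le_S finite by (auto intro: enn2real_mono)
  qed
  then show ?thesis unfolding uniformly_L2_def bdd_above_def by blast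
qed

locale prob_family =
  fixes Ps :: "'a measure set"
  assumes nonempty: "Ps \<noteq> {}" and prob_space: "\<And>P. P \<in> Ps \<Longrightarrow> prob_space P"
begin

lemma mixtures_nonempty: "mixtures Ps \<noteq> {}"
  using nonempty mixtures.expectation by blast

lemma mixture_affine:
  assumes l: "l \<in> mixtures Ps"
    and f: "\<forall>P\<in>Ps. integrable P f" and g: "\<forall>P\<in>Ps. integrable P g" and h: "\<forall>P\<in>Ps. integrable P h"
  shows "l (\<lambda>\<omega>. a * f \<omega> + b * g \<omega> + c * h \<omega> + d) = a * l f + b * l g + c * l h + d"
  using l
proof induction
  case (expectation P)
  then interpret prob_space P using prob_space by blast
  show ?case using expectation f g h by (simp add: prob_space)
next
  case (mix l1 l2 t)
  then show ?case by (simp add: algebra_simps)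
qed

lemma mixture_le:
  assumes "l \<in> mixtures Ps" and "\<And>P. P \<in> Ps \<Longrightarrow> (\<integral>\<omega>. W \<omega> \<partial>P) \<le> B"
  shows "l W \<le> B"
  using assms(1)
proof induction
  case (expectation P)
  then show ?case using assms(2) by blast
next
  case (mix l1 l2 t)
  then have "t * l1 W + (1 - t) * l2 W \<le> t * B + (1 - t) * B"
    by (intro add_mono mult_left_mono) auto
  then show ?case by (simp add: algebra_simps)
qed

lemma mixture_uminus: "l \<in> mixtures Ps \<Longrightarrow> l (\<lambda>\<omega>. - W \<omega>) = - l W"
  by (induction rule: mixtures.induct) (simp_all add: algebra_simps)

lemma mixture_abs_le:
  assumes "l \<in> mixtures Ps" and "\<And>P. P \<in> Ps \<Longrightarrow> \<bar>\<integral>\<omega>. W \<omega> \<partial>P\<bar> \<le> B"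
  shows "\<bar>l W\<bar> \<le> B"
proof -
  have "l W \<le> B"
    by (rule mixture_le[OF assms(1)]) (use assms(2) in \<open>auto simp: abs_le_iff\<close>)
  moreover have "l (\<lambda>\<omega>. - W \<omega>) \<le> B"
    by (rule mixture_le[OF assms(1)]) (use assms(2) in \<open>auto simp: abs_le_iff\<close>)
  ultimately show ?thesis using mixture_uminus[OF assms(1)] by (simp add: abs_le_iff)
qed

lemma mixture_le_sub_exp:
  assumes "l \<in> mixtures Ps" and "bdd_above ((\<lambda>P. \<integral>\<omega>. W \<omega> \<partial>P) ` Ps)"
  shows "l W \<le> sub_exp Ps W"
  unfolding sub_exp_def by (rule mixture_le[OF assms(1)]) (use assms(2) in \<open>auto intro: cSUP_upper\<close>)

lemma sub_exp_le:
  assumes "\<And>P. P \<in> Ps \<Longrightarrow> (\<integral>\<omega>. W \<omega> \<partial>P) \<le> B"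
  shows "sub_exp Ps W \<le> B"
  unfolding sub_exp_def using nonempty assms by (intro cSUP_least) auto

lemma sub_exp_abs_le:
  assumes "\<And>P. P \<in> Ps \<Longrightarrow> \<bar>\<integral>\<omega>. W \<omega> \<partial>P\<bar> \<le> K"
  shows "\<bar>sub_exp Ps W\<bar> \<le> K"
proof -
  obtain P0 where P0: "P0 \<in> Ps" using nonempty by blast
  have "- K \<le> (\<integral>\<omega>. W \<omega> \<partial>P0)" using assms[OF P0] by linarith
  also have "\<dots> \<le> sub_exp Ps W"
    unfolding sub_exp_def
    by (intro cSUP_upper P0 bdd_aboveI[where M = K]) (use assms in \<open>auto simp: abs_le_iff\<close>)
  finally show ?thesis using assms by (auto simp: abs_le_iff intro: sub_exp_le)
qed

lemma uniformly_L2_integrable: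
  assumes "uniformly_L2 Ps X" and "P \<in> Ps"
  shows "integrable P X"
proof -
  interpret prob_space P using prob_space[OF assms(2)] .
  show ?thesis
    using assms unfolding uniformly_L2_def by (auto intro: square_integrable_imp_integrable)
qed

lemma uniformly_L2_integrable_mult:
  assumes X: "uniformly_L2 Ps X" and Y: "uniformly_L2 Ps Y" and P: "P \<in> Ps"
  shows "integrable P (\<lambda>\<omega>. X \<omega> * Y \<omega>)"
proof (rule Bochner_Integration.integrable_bound)
  show "integrable P (\<lambda>\<omega>. (X \<omega>)\<^sup>2 + (Y \<omega>)\<^sup>2)"
    using X Y P unfolding uniformly_L2_def by auto
  show "(\<lambda>\<omega>. X \<omega> * Y \<omega>) \<in> borel_measurable P"
    using X Y P unfolding uniformly_L2_def by (auto intro: borel_measurable_times)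
  have "\<bar>x * y\<bar> \<le> x\<^sup>2 + y\<^sup>2" for x y :: real
  proof -
    have "2 * (\<bar>x\<bar> * \<bar>y\<bar>) \<le> x\<^sup>2 + y\<^sup>2"
      using sum_squares_bound[of "\<bar>x\<bar>" "\<bar>y\<bar>"] by (simp add: mult.assoc)
    then show ?thesis unfolding abs_mult using zero_le_mult_iff[of "\<bar>x\<bar>" "\<bar>y\<bar>"] by linarith
  qed
  then show "AE \<omega> in P. norm (X \<omega> * Y \<omega>) \<le> norm ((X \<omega>)\<^sup>2 + (Y \<omega>)\<^sup>2)"
    by auto
qed

lemma uniformly_L2_lincomb:
  assumes X: "uniformly_L2 Ps X" and Y: "uniformly_L2 Ps Y"
  shows "uniformly_L2 Ps (\<lambda>\<omega>. a * X \<omega> + b * Y \<omega> + c)"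
proof -
  obtain BX where BX: "\<And>P. P \<in> Ps \<Longrightarrow> (\<integral>\<omega>. (X \<omega>)\<^sup>2 \<partial>P) \<le> BX"
    using X unfolding uniformly_L2_def bdd_above_def by blast
  obtain BY where BY: "\<And>P. P \<in> Ps \<Longrightarrow> (\<integral>\<omega>. (Y \<omega>)\<^sup>2 \<partial>P) \<le> BY"
    using Y unfolding uniformly_L2_def bdd_above_def by blast
  let ?Z = "\<lambda>\<omega>. a * X \<omega> + b * Y \<omega> + c"
  let ?bound = "\<lambda>\<omega>. 3 * a\<^sup>2 * (X \<omega>)\<^sup>2 + 3 * b\<^sup>2 * (Y \<omega>)\<^sup>2 + 3 * c\<^sup>2"
  have three_squares: "(u + v + w)\<^sup>2 \<le> 3 * (u\<^sup>2 + v\<^sup>2 + w\<^sup>2)" for u v w :: real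
  proof -
    have "0 \<le> (u - v)\<^sup>2 + (v - w)\<^sup>2 + (u - w)\<^sup>2" by simp
    then show ?thesis by (simp add: power2_eq_square algebra_simps)
  qed
  have "?Z \<in> borel_measurable P \<and> integrable P (\<lambda>\<omega>. (?Z \<omega>)\<^sup>2)
      \<and> (\<integral>\<omega>. (?Z \<omega>)\<^sup>2 \<partial>P) \<le> 3 * a\<^sup>2 * BX + 3 * b\<^sup>2 * BY + 3 * c\<^sup>2"
    if P: "P \<in> Ps" for P
  proof -
    interpret prob_space P using prob_space[OF P] .
    have sq_X: "integrable P (\<lambda>\<omega>. (X \<omega>)\<^sup>2)" and sq_Y: "integrable P (\<lambda>\<omega>. (Y \<omega>)\<^sup>2)"
      and "X \<in> borel_measurable P" "Y \<in> borel_measurable P"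
      using X Y P unfolding uniformly_L2_def by auto
    then have measurable: "?Z \<in> borel_measurable P" "(\<lambda>\<omega>. (?Z \<omega>)\<^sup>2) \<in> borel_measurable P"
      by measurable
    have le_bound: "(?Z \<omega>)\<^sup>2 \<le> ?bound \<omega>" for \<omega>
      using three_squares[of "a * X \<omega>" "b * Y \<omega>" c] by (simp add: power_mult_distrib algebra_simps)
    have "integrable P ?bound" using sq_X sq_Y by simp
    then have integrable: "integrable P (\<lambda>\<omega>. (?Z \<omega>)\<^sup>2)"
      by (rule Bochner_Integration.integrable_bound) (use measurable le_bound in auto)
    have "(\<integral>\<omega>. (?Z \<omega>)\<^sup>2 \<partial>P) \<le> (\<integral>\<omega>. ?bound \<omega> \<partial>P)"
      using integrable \<open>integrable P ?bound\<close> le_bound by (intro integral_mono) auto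
    also have "\<dots> = 3 * a\<^sup>2 * (\<integral>\<omega>. (X \<omega>)\<^sup>2 \<partial>P) + 3 * b\<^sup>2 * (\<integral>\<omega>. (Y \<omega>)\<^sup>2 \<partial>P) + 3 * c\<^sup>2"
      using sq_X sq_Y by (simp add: prob_space)
    also have "\<dots> \<le> 3 * a\<^sup>2 * BX + 3 * b\<^sup>2 * BY + 3 * c\<^sup>2"
      using BX[OF P] BY[OF P] by (intro add_mono mult_left_mono) auto
    finally show ?thesis using measurable integrable by blast
  qed
  then show ?thesis unfolding uniformly_L2_def bdd_above_def by blast
qed

lemma uniformly_L2_affine: "uniformly_L2 Ps X \<Longrightarrow> uniformly_L2 Ps (\<lambda>\<omega>. a * X \<omega> + c)"
  using uniformly_L2_lincomb[of X X a 0 c] by simp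

lemma uniformly_L2_add: "uniformly_L2 Ps X \<Longrightarrow> uniformly_L2 Ps Y \<Longrightarrow> uniformly_L2 Ps (\<lambda>\<omega>. X \<omega> + Y \<omega>)"
  using uniformly_L2_lincomb[of X Y 1 1 0] by simp

lemma uniformly_L2_uminus: "uniformly_L2 Ps X \<Longrightarrow> uniformly_L2 Ps (\<lambda>\<omega>. - X \<omega>)"
  using uniformly_L2_affine[of X "- 1" 0] by simp

lemma uniformly_L2_integral_bounded:
  assumes "uniformly_L2 Ps X"
  obtains B where "\<And>P. P \<in> Ps \<Longrightarrow> \<bar>\<integral>\<omega>. X \<omega> \<partial>P\<bar> \<le> B"
proof -
  obtain B where B: "\<And>P. P \<in> Ps \<Longrightarrow> (\<integral>\<omega>. (X \<omega>)\<^sup>2 \<partial>P) \<le> B"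
    using assms unfolding uniformly_L2_def bdd_above_def by blast
  have "\<bar>\<integral>\<omega>. X \<omega> \<partial>P\<bar> \<le> 1 + B" if P: "P \<in> Ps" for P
  proof -
    interpret prob_space P using prob_space[OF P] .
    have sq: "integrable P (\<lambda>\<omega>. (X \<omega>)\<^sup>2)" using assms P unfolding uniformly_L2_def by auto
    have "\<bar>\<integral>\<omega>. X \<omega> \<partial>P\<bar> \<le> (\<integral>\<omega>. \<bar>X \<omega>\<bar> \<partial>P)" by (rule integral_abs_bound)
    also have "\<dots> \<le> (\<integral>\<omega>. 1 + (X \<omega>)\<^sup>2 \<partial>P)"
      using uniformly_L2_integrable[OF assms P] sq abs_le_one_plus_square by (intro integral_mono) auto
    also have "\<dots> = 1 + (\<integral>\<omega>. (X \<omega>)\<^sup>2 \<partial>P)" using sq by (simp add: prob_space)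
    finally show ?thesis using B[OF P] by linarith
  qed
  then show ?thesis by (rule that)
qed

lemma mixture_mem_mean_interval:
  assumes X: "uniformly_L2 Ps X" and l: "l \<in> mixtures Ps"
  shows "l X \<in> mean_interval Ps X"
proof -
  obtain B where B: "\<And>P. P \<in> Ps \<Longrightarrow> \<bar>\<integral>\<omega>. X \<omega> \<partial>P\<bar> \<le> B"
    using uniformly_L2_integral_bounded[OF X] by blast
  have "l X \<le> sub_exp Ps X"
    by (rule mixture_le_sub_exp[OF l], rule bdd_aboveI2[where M = B]) (use B in \<open>auto simp: abs_le_iff\<close>)
  moreover have "- l X \<le> sub_exp Ps (\<lambda>\<omega>. - X \<omega>)"
    unfolding mixture_uminus[OF l, symmetric]
    by (rule mixture_le_sub_exp[OF l], rule bdd_aboveI2[where M = B]) (use B in \<open>auto simp: abs_le_iff\<close>)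
  ultimately show ?thesis unfolding mean_interval_def lower_mean_def upper_mean_def by simp
qed

lemma mixture_centered_product:
  assumes X: "uniformly_L2 Ps X" and Y: "uniformly_L2 Ps Y" and l: "l \<in> mixtures Ps"
  shows "l (\<lambda>\<omega>. (X \<omega> - m1) * (Y \<omega> - m2))
    = l (\<lambda>\<omega>. X \<omega> * Y \<omega>) - m1 * l Y - m2 * l X + m1 * m2"
proof -
  have "(\<lambda>\<omega>. (X \<omega> - m1) * (Y \<omega> - m2))
      = (\<lambda>\<omega>. 1 * (X \<omega> * Y \<omega>) + (- m1) * Y \<omega> + (- m2) * X \<omega> + m1 * m2)"
    by (rule ext) (simp add: algebra_simps)
  then show ?thesis
    using mixture_affine[OF l, of "\<lambda>\<omega>. X \<omega> * Y \<omega>" Y X 1 "- m1" "- m2" "m1 * m2"]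
      uniformly_L2_integrable_mult[OF X Y] uniformly_L2_integrable[OF X] uniformly_L2_integrable[OF Y]
    by simp
qed

lemma mixture_cov_eq_centered:
  assumes "uniformly_L2 Ps X" and "uniformly_L2 Ps Y" and "l \<in> mixtures Ps"
  shows "mixture_cov l X Y = l (\<lambda>\<omega>. (X \<omega> - m) * (Y \<omega> - l Y))"
  using mixture_centered_product[OF assms, of m "l Y"] unfolding mixture_cov_def by (simp add: algebra_simps)

lemma centered_product_integral_bounded:
  assumes X: "uniformly_L2 Ps X" and Y: "uniformly_L2 Ps Y"
  obtains K where "\<And>P m1 m2. P \<in> Ps \<Longrightarrow> m1 \<in> mean_interval Ps X \<Longrightarrow> m2 \<in> mean_interval Ps Y \<Longrightarrow>
    \<bar>\<integral>\<omega>. (X \<omega> - m1) * (Y \<omega> - m2) \<partial>P\<bar> \<le> K"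
proof -
  obtain BX where BX: "\<And>P. P \<in> Ps \<Longrightarrow> (\<integral>\<omega>. (X \<omega>)\<^sup>2 \<partial>P) \<le> BX"
    using X unfolding uniformly_L2_def bdd_above_def by blast
  obtain BY where BY: "\<And>P. P \<in> Ps \<Longrightarrow> (\<integral>\<omega>. (Y \<omega>)\<^sup>2 \<partial>P) \<le> BY"
    using Y unfolding uniformly_L2_def bdd_above_def by blast
  define R1 where "R1 = (lower_mean Ps X)\<^sup>2 + (upper_mean Ps X)\<^sup>2"
  define R2 where "R2 = (lower_mean Ps Y)\<^sup>2 + (upper_mean Ps Y)\<^sup>2"
  have "\<bar>\<integral>\<omega>. (X \<omega> - m1) * (Y \<omega> - m2) \<partial>P\<bar> \<le> 2 * BX + 2 * BY + 2 * R1 + 2 * R2"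
    if P: "P \<in> Ps" and m1: "m1 \<in> mean_interval Ps X" and m2: "m2 \<in> mean_interval Ps Y" for P m1 m2
  proof -
    interpret prob_space P using prob_space[OF P] .
    let ?bound = "\<lambda>\<omega>. 2 * (X \<omega>)\<^sup>2 + 2 * (Y \<omega>)\<^sup>2 + (2 * m1\<^sup>2 + 2 * m2\<^sup>2)"
    have sq_X: "integrable P (\<lambda>\<omega>. (X \<omega>)\<^sup>2)" and sq_Y: "integrable P (\<lambda>\<omega>. (Y \<omega>)\<^sup>2)"
      using X Y P unfolding uniformly_L2_def by auto
    have pointwise: "\<bar>(x - m1) * (y - m2)\<bar> \<le> 2 * x\<^sup>2 + 2 * y\<^sup>2 + (2 * m1\<^sup>2 + 2 * m2\<^sup>2)" for x y :: real
    proof -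
      have "2 * \<bar>(x - m1) * (y - m2)\<bar> \<le> (x - m1)\<^sup>2 + (y - m2)\<^sup>2"
        using sum_squares_bound[of "\<bar>x - m1\<bar>" "\<bar>y - m2\<bar>"] by (simp add: abs_mult)
      moreover have "(x - m1)\<^sup>2 + (y - m2)\<^sup>2 \<le> 2 * x\<^sup>2 + 2 * y\<^sup>2 + (2 * m1\<^sup>2 + 2 * m2\<^sup>2)"
        using zero_le_power2[of "x + m1"] zero_le_power2[of "y + m2"]
        by (simp add: power2_eq_square algebra_simps)
      ultimately show ?thesis using abs_ge_zero[of "(x - m1) * (y - m2)"] by linarith
    qed
    have "integrable P (\<lambda>\<omega>. (X \<omega> - m1) * (Y \<omega> - m2))"
      using uniformly_L2_affine[OF X, of 1 "- m1"] uniformly_L2_affine[OF Y, of 1 "- m2"]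
      by (intro uniformly_L2_integrable_mult[OF _ _ P]) simp_all
    then have "(\<integral>\<omega>. \<bar>(X \<omega> - m1) * (Y \<omega> - m2)\<bar> \<partial>P) \<le> (\<integral>\<omega>. ?bound \<omega> \<partial>P)"
      using sq_X sq_Y pointwise by (intro integral_mono integrable_abs) simp_all
    then have "\<bar>\<integral>\<omega>. (X \<omega> - m1) * (Y \<omega> - m2) \<partial>P\<bar> \<le> (\<integral>\<omega>. ?bound \<omega> \<partial>P)"
      by (rule order_trans[OF integral_abs_bound])
    also have "\<dots> = 2 * (\<integral>\<omega>. (X \<omega>)\<^sup>2 \<partial>P) + 2 * (\<integral>\<omega>. (Y \<omega>)\<^sup>2 \<partial>P) + (2 * m1\<^sup>2 + 2 * m2\<^sup>2)"
      using sq_X sq_Y by (simp add: prob_space)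
    also have "\<dots> \<le> 2 * BX + 2 * BY + 2 * R1 + 2 * R2"
      using BX[OF P] BY[OF P] m1 m2
        square_le_of_mem_interval[of "lower_mean Ps X" m1 "upper_mean Ps X"]
        square_le_of_mem_interval[of "lower_mean Ps Y" m2 "upper_mean Ps Y"]
      unfolding R1_def R2_def mean_interval_def by simp
    finally show ?thesis .
  qed
  then show ?thesis by (rule that)
qed

lemma mean_interval_nonempty:
  assumes "uniformly_L2 Ps X"
  shows "mean_interval Ps X \<noteq> {}"
proof -
  obtain l where "l \<in> mixtures Ps" using mixtures_nonempty by blast
  then show ?thesis using mixture_mem_mean_interval[OF assms] by blast
qed

lemma mixture_cov_bdd:
  assumes X: "uniformly_L2 Ps X" and Y: "uniformly_L2 Ps Y"
  shows "bdd_above ((\<lambda>l. mixture_cov l X Y) ` mixtures Ps)"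
    and "bdd_below ((\<lambda>l. mixture_cov l X Y) ` mixtures Ps)"
proof -
  obtain K where K: "\<And>P m1 m2. P \<in> Ps \<Longrightarrow> m1 \<in> mean_interval Ps X \<Longrightarrow> m2 \<in> mean_interval Ps Y \<Longrightarrow>
      \<bar>\<integral>\<omega>. (X \<omega> - m1) * (Y \<omega> - m2) \<partial>P\<bar> \<le> K"
    using centered_product_integral_bounded[OF X Y] by blast
  have "- K \<le> mixture_cov l X Y \<and> mixture_cov l X Y \<le> K" if l: "l \<in> mixtures Ps" for l
  proof -
    have "\<bar>l (\<lambda>\<omega>. (X \<omega> - l X) * (Y \<omega> - l Y))\<bar> \<le> K"
      using K mixture_mem_mean_interval[OF X l] mixture_mem_mean_interval[OF Y l]
      by (intro mixture_abs_le[OF l]) blast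
    then show ?thesis using mixture_cov_eq_centered[OF X Y l, of "l X"] by (simp add: abs_le_iff)
  qed
  then show "bdd_above ((\<lambda>l. mixture_cov l X Y) ` mixtures Ps)"
    and "bdd_below ((\<lambda>l. mixture_cov l X Y) ` mixtures Ps)"
    by (meson bdd_aboveI2 bdd_belowI2)+
qed

lemma SUP_mixture_cov_le_upper_cov:
  assumes X: "uniformly_L2 Ps X" and Y: "uniformly_L2 Ps Y"
  shows "(SUP l\<in>mixtures Ps. mixture_cov l X Y) \<le> upper_cov Ps X Y"
proof (rule cSUP_least[OF mixtures_nonempty])
  fix l assume l: "l \<in> mixtures Ps"
  let ?I1 = "mean_interval Ps X" and ?I2 = "mean_interval Ps Y"
  let ?g = "\<lambda>m1 m2. sub_exp Ps (\<lambda>\<omega>. (X \<omega> - m1) * (Y \<omega> - m2))"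
  obtain K where K: "\<And>P m1 m2. P \<in> Ps \<Longrightarrow> m1 \<in> ?I1 \<Longrightarrow> m2 \<in> ?I2 \<Longrightarrow>
      \<bar>\<integral>\<omega>. (X \<omega> - m1) * (Y \<omega> - m2) \<partial>P\<bar> \<le> K"
    using centered_product_integral_bounded[OF X Y] by blast
  have g_bounded: "- K \<le> ?g m1 m2 \<and> ?g m1 m2 \<le> K" if "m1 \<in> ?I1" "m2 \<in> ?I2" for m1 m2
    using sub_exp_abs_le[OF K[OF _ that]] by (simp add: abs_le_iff)
  have lX: "l X \<in> ?I1" and lY: "l Y \<in> ?I2"
    using mixture_mem_mean_interval[OF X l] mixture_mem_mean_interval[OF Y l] .
  have "mixture_cov l X Y \<le> (INF m1\<in>?I1. ?g m1 (l Y))"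
  proof (rule cINF_greatest)
    show "?I1 \<noteq> {}" using lX by blast
  next
    fix m1 assume m1: "m1 \<in> ?I1"
    have "mixture_cov l X Y = l (\<lambda>\<omega>. (X \<omega> - m1) * (Y \<omega> - l Y))"
      by (rule mixture_cov_eq_centered[OF X Y l])
    also have "\<dots> \<le> ?g m1 (l Y)"
      by (rule mixture_le_sub_exp[OF l], rule bdd_aboveI2[where M = K])
        (use K[OF _ m1 lY] in \<open>simp add: abs_le_iff\<close>)
    finally show "mixture_cov l X Y \<le> ?g m1 (l Y)" .
  qed
  also have "\<dots> \<le> upper_cov Ps X Y"
    unfolding upper_cov_def
  proof (rule cSUP_upper[OF lY])
    have "(INF m1\<in>?I1. ?g m1 m2) \<le> K" if m2: "m2 \<in> ?I2" for m2
    proof -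
      have "(INF m1\<in>?I1. ?g m1 m2) \<le> ?g (l X) m2"
        by (rule cINF_lower[OF _ lX], rule bdd_belowI2[where m = "- K"])
          (use g_bounded[OF _ m2] in blast)
      also have "\<dots> \<le> K" using g_bounded[OF lX m2] by simp
      finally show ?thesis .
    qed
    then show "bdd_above ((\<lambda>m2. INF m1\<in>?I1. ?g m1 m2) ` ?I2)" by (rule bdd_aboveI2)
  qed
  finally show "mixture_cov l X Y \<le> upper_cov Ps X Y" .
qed

lemma common_mean_bounding_centered_products:
  assumes X: "uniformly_L2 Ps X" and Y: "uniformly_L2 Ps Y"
  obtains s where "s \<in> mean_interval Ps X"
    and "\<And>l. l \<in> mixtures Ps \<Longrightarrow>
      l (\<lambda>\<omega>. (X \<omega> - s) * (Y \<omega> - m)) \<le> (SUP l\<in>mixtures Ps. mixture_cov l X Y)"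
proof -
  let ?C = "SUP l\<in>mixtures Ps. mixture_cov l X Y"
  let ?L = "(\<lambda>l. (l (\<lambda>\<omega>. X \<omega> * Y \<omega>) - m * l X, m - l Y)) ` mixtures Ps"
  have "convex ?L"
    by (rule convex_image_mixtures) (simp add: algebra_simps)
  moreover have "lower_mean Ps X \<le> upper_mean Ps X"
    using mean_interval_nonempty[OF X] unfolding mean_interval_def by simp
  moreover have "\<exists>x\<in>mean_interval Ps X. \<alpha> + \<beta> * x \<le> ?C" if "(\<alpha>, \<beta>) \<in> ?L" for \<alpha> \<beta>
  proof -
    from that obtain l where l: "l \<in> mixtures Ps"
      and \<alpha>: "\<alpha> = l (\<lambda>\<omega>. X \<omega> * Y \<omega>) - m * l X" and \<beta>: "\<beta> = m - l Y" by auto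
    have "\<alpha> + \<beta> * l X = mixture_cov l X Y"
      unfolding \<alpha> \<beta> mixture_cov_def by (simp add: algebra_simps)
    also have "\<dots> \<le> ?C" by (rule cSUP_upper[OF l mixture_cov_bdd(1)[OF X Y]])
    finally show ?thesis by (intro bexI[OF _ mixture_mem_mean_interval[OF X l]])
  qed
  ultimately obtain s where s: "s \<in> mean_interval Ps X" and below: "\<forall>(\<alpha>, \<beta>)\<in>?L. \<alpha> + \<beta> * s \<le> ?C"
    using convex_affine_family_common_point[of ?L "lower_mean Ps X" "upper_mean Ps X" ?C]
    unfolding mean_interval_def by blast
  have "l (\<lambda>\<omega>. (X \<omega> - s) * (Y \<omega> - m)) \<le> ?C" if l: "l \<in> mixtures Ps" for l
    using below l mixture_centered_product[OF X Y l, of s m] by (force simp: algebra_simps)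
  with s show ?thesis by (rule that)
qed

lemma upper_cov_le_SUP_mixture_cov:
  assumes X: "uniformly_L2 Ps X" and Y: "uniformly_L2 Ps Y"
  shows "upper_cov Ps X Y \<le> (SUP l\<in>mixtures Ps. mixture_cov l X Y)"
  unfolding upper_cov_def
proof (rule cSUP_least)
  show "mean_interval Ps Y \<noteq> {}" by (rule mean_interval_nonempty[OF Y])
next
  fix m2 assume m2: "m2 \<in> mean_interval Ps Y"
  let ?g = "\<lambda>m1. sub_exp Ps (\<lambda>\<omega>. (X \<omega> - m1) * (Y \<omega> - m2))"
  obtain K where K: "\<And>P m1 m2. P \<in> Ps \<Longrightarrow> m1 \<in> mean_interval Ps X \<Longrightarrow> m2 \<in> mean_interval Ps Y \<Longrightarrow>
      \<bar>\<integral>\<omega>. (X \<omega> - m1) * (Y \<omega> - m2) \<partial>P\<bar> \<le> K"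
    using centered_product_integral_bounded[OF X Y] by blast
  obtain s where s: "s \<in> mean_interval Ps X"
    and below: "\<And>l. l \<in> mixtures Ps \<Longrightarrow>
      l (\<lambda>\<omega>. (X \<omega> - s) * (Y \<omega> - m2)) \<le> (SUP l\<in>mixtures Ps. mixture_cov l X Y)"
    using common_mean_bounding_centered_products[OF X Y] by blast
  have "(INF m1\<in>mean_interval Ps X. ?g m1) \<le> ?g s"
  proof (rule cINF_lower[OF _ s], rule bdd_belowI2[where m = "- K"])
    fix m1 assume "m1 \<in> mean_interval Ps X"
    then have "\<bar>?g m1\<bar> \<le> K" using K m2 by (intro sub_exp_abs_le) blast
    then show "- K \<le> ?g m1" by (simp add: abs_le_iff)
  qed
  also have "\<dots> \<le> (SUP l\<in>mixtures Ps. mixture_cov l X Y)"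
    using below[OF mixtures.expectation] by (rule sub_exp_le)
  finally show "(INF m1\<in>mean_interval Ps X. ?g m1) \<le> (SUP l\<in>mixtures Ps. mixture_cov l X Y)" .
qed

lemma upper_cov_eq_SUP_mixture_cov:
  assumes "uniformly_L2 Ps X" and "uniformly_L2 Ps Y"
  shows "upper_cov Ps X Y = (SUP l\<in>mixtures Ps. mixture_cov l X Y)"
  using upper_cov_le_SUP_mixture_cov[OF assms] SUP_mixture_cov_le_upper_cov[OF assms] by (rule antisym)

lemma mixture_cov_affine:
  assumes X: "uniformly_L2 Ps X" and Y: "uniformly_L2 Ps Y" and l: "l \<in> mixtures Ps"
  shows "mixture_cov l (\<lambda>\<omega>. a * X \<omega> + c) (\<lambda>\<omega>. b * Y \<omega> + d) = a * b * mixture_cov l X Y"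
proof -
  have "(\<lambda>\<omega>. (a * X \<omega> + c) * (b * Y \<omega> + d))
      = (\<lambda>\<omega>. (a * b) * (X \<omega> * Y \<omega>) + (a * d) * X \<omega> + (c * b) * Y \<omega> + c * d)"
    by (rule ext) (simp add: algebra_simps)
  then have "l (\<lambda>\<omega>. (a * X \<omega> + c) * (b * Y \<omega> + d))
      = (a * b) * l (\<lambda>\<omega>. X \<omega> * Y \<omega>) + (a * d) * l X + (c * b) * l Y + c * d"
    using mixture_affine[OF l] uniformly_L2_integrable_mult[OF X Y]
      uniformly_L2_integrable[OF X] uniformly_L2_integrable[OF Y] by simp
  moreover have "l (\<lambda>\<omega>. a * X \<omega> + c) = a * l X + c" and "l (\<lambda>\<omega>. b * Y \<omega> + d) = b * l Y + d"
    using mixture_affine[OF l, of X X X a 0 0 c] mixture_affine[OF l, of Y Y Y b 0 0 d]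
      uniformly_L2_integrable[OF X] uniformly_L2_integrable[OF Y] by simp_all
  ultimately show ?thesis unfolding mixture_cov_def by (simp add: algebra_simps)
qed

lemma mixture_cov_add_left:
  assumes X: "uniformly_L2 Ps X" and Y: "uniformly_L2 Ps Y" and Z: "uniformly_L2 Ps Z"
    and l: "l \<in> mixtures Ps"
  shows "mixture_cov l (\<lambda>\<omega>. X \<omega> + Y \<omega>) Z = mixture_cov l X Z + mixture_cov l Y Z"
proof -
  have "l (\<lambda>\<omega>. (X \<omega> + Y \<omega>) * Z \<omega>) = l (\<lambda>\<omega>. X \<omega> * Z \<omega>) + l (\<lambda>\<omega>. Y \<omega> * Z \<omega>)"
    using mixture_affine[OF l, of "\<lambda>\<omega>. X \<omega> * Z \<omega>" "\<lambda>\<omega>. Y \<omega> * Z \<omega>" Z 1 1 0 0]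
      uniformly_L2_integrable_mult[OF X Z] uniformly_L2_integrable_mult[OF Y Z]
      uniformly_L2_integrable[OF Z]
    by (simp add: distrib_right)
  moreover have "l (\<lambda>\<omega>. X \<omega> + Y \<omega>) = l X + l Y"
    using mixture_affine[OF l, of X Y Y 1 1 0 0]
      uniformly_L2_integrable[OF X] uniformly_L2_integrable[OF Y] by simp
  ultimately show ?thesis unfolding mixture_cov_def by (simp add: algebra_simps)
qed

lemma lower_cov_eq_INF_mixture_cov:
  assumes X: "uniformly_L2 Ps X" and Y: "uniformly_L2 Ps Y"
  shows "lower_cov Ps X Y = (INF l\<in>mixtures Ps. mixture_cov l X Y)"
proof -
  have "lower_cov Ps X Y = - (SUP l\<in>mixtures Ps. mixture_cov l (\<lambda>\<omega>. - X \<omega>) Y)"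
    unfolding lower_cov_eq_uminus_upper_cov upper_cov_eq_SUP_mixture_cov[OF uniformly_L2_uminus[OF X] Y] ..
  also have "\<dots> = - (SUP l\<in>mixtures Ps. - mixture_cov l X Y)"
    using mixture_cov_affine[OF X Y, of _ "- 1" 0 1 0] by (simp cong: SUP_cong)
  also have "\<dots> = (INF l\<in>mixtures Ps. mixture_cov l X Y)"
    by (simp add: INF_real_eq_uminus_SUP)
  finally show ?thesis .
qed

lemma upper_cov_commute:
  assumes "uniformly_L2 Ps X" and "uniformly_L2 Ps Y"
  shows "upper_cov Ps X Y = upper_cov Ps Y X"
  unfolding upper_cov_eq_SUP_mixture_cov[OF assms] upper_cov_eq_SUP_mixture_cov[OF assms(2,1)]
  by (simp add: mixture_cov_commute)

lemma lower_cov_commute: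
  assumes "uniformly_L2 Ps X" and "uniformly_L2 Ps Y"
  shows "lower_cov Ps X Y = lower_cov Ps Y X"
  unfolding lower_cov_eq_INF_mixture_cov[OF assms] lower_cov_eq_INF_mixture_cov[OF assms(2,1)]
  by (simp add: mixture_cov_commute)

lemma upper_cov_affine:
  assumes X: "uniformly_L2 Ps X" and Y: "uniformly_L2 Ps Y" and ab: "0 \<le> a * b"
  shows "upper_cov Ps (\<lambda>\<omega>. a * X \<omega> + c) (\<lambda>\<omega>. b * Y \<omega> + d) = a * b * upper_cov Ps X Y"
proof -
  have "upper_cov Ps (\<lambda>\<omega>. a * X \<omega> + c) (\<lambda>\<omega>. b * Y \<omega> + d) = (SUP l\<in>mixtures Ps. a * b * mixture_cov l X Y)"
    using mixture_cov_affine[OF X Y]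
    by (simp add: upper_cov_eq_SUP_mixture_cov[OF uniformly_L2_affine[OF X] uniformly_L2_affine[OF Y]]
        cong: SUP_cong)
  also have "\<dots> = a * b * upper_cov Ps X Y"
    unfolding upper_cov_eq_SUP_mixture_cov[OF X Y]
    by (rule cSUP_mult_left_nonneg[OF ab mixtures_nonempty mixture_cov_bdd(1)[OF X Y]])
  finally show ?thesis .
qed

lemma lower_cov_affine:
  assumes X: "uniformly_L2 Ps X" and Y: "uniformly_L2 Ps Y" and ab: "0 \<le> a * b"
  shows "lower_cov Ps (\<lambda>\<omega>. a * X \<omega> + c) (\<lambda>\<omega>. b * Y \<omega> + d) = a * b * lower_cov Ps X Y"
proof -
  have "lower_cov Ps (\<lambda>\<omega>. a * X \<omega> + c) (\<lambda>\<omega>. b * Y \<omega> + d) = (INF l\<in>mixtures Ps. a * b * mixture_cov l X Y)"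
    using mixture_cov_affine[OF X Y]
    by (simp add: lower_cov_eq_INF_mixture_cov[OF uniformly_L2_affine[OF X] uniformly_L2_affine[OF Y]]
        cong: INF_cong)
  also have "\<dots> = a * b * lower_cov Ps X Y"
    unfolding lower_cov_eq_INF_mixture_cov[OF X Y]
    by (rule cINF_mult_left_nonneg[OF ab mixtures_nonempty mixture_cov_bdd(2)[OF X Y]])
  finally show ?thesis .
qed

lemma upper_cov_affine_nonpos:
  assumes X: "uniformly_L2 Ps X" and Y: "uniformly_L2 Ps Y" and ab: "a * b \<le> 0"
  shows "upper_cov Ps (\<lambda>\<omega>. a * X \<omega> + c) (\<lambda>\<omega>. b * Y \<omega> + d) = a * b * lower_cov Ps X Y"
proof -
  have "upper_cov Ps (\<lambda>\<omega>. a * X \<omega> + c) (\<lambda>\<omega>. b * Y \<omega> + d)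
      = (SUP l\<in>mixtures Ps. - (a * b) * - mixture_cov l X Y)"
    using mixture_cov_affine[OF X Y]
    by (simp add: upper_cov_eq_SUP_mixture_cov[OF uniformly_L2_affine[OF X] uniformly_L2_affine[OF Y]]
        cong: SUP_cong)
  also have "\<dots> = - (a * b) * (SUP l\<in>mixtures Ps. - mixture_cov l X Y)"
    using ab mixture_cov_bdd(2)[OF X Y]
    by (intro cSUP_mult_left_nonneg mixtures_nonempty) (simp_all add: bdd_above_uminus_image)
  also have "\<dots> = a * b * lower_cov Ps X Y"
    unfolding lower_cov_eq_INF_mixture_cov[OF X Y]
    by (simp flip: uminus_cINF[OF mixture_cov_bdd(2)[OF X Y] mixtures_nonempty])
  finally show ?thesis .
qed

lemma upper_cov_add_left_le:
  assumes X: "uniformly_L2 Ps X" and Y: "uniformly_L2 Ps Y" and Z: "uniformly_L2 Ps Z"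
  shows "upper_cov Ps (\<lambda>\<omega>. X \<omega> + Y \<omega>) Z \<le> upper_cov Ps X Z + upper_cov Ps Y Z"
  unfolding upper_cov_eq_SUP_mixture_cov[OF uniformly_L2_add[OF X Y] Z]
    upper_cov_eq_SUP_mixture_cov[OF X Z] upper_cov_eq_SUP_mixture_cov[OF Y Z]
proof (rule cSUP_least[OF mixtures_nonempty])
  fix l assume l: "l \<in> mixtures Ps"
  show "mixture_cov l (\<lambda>\<omega>. X \<omega> + Y \<omega>) Z
      \<le> (SUP l\<in>mixtures Ps. mixture_cov l X Z) + (SUP l\<in>mixtures Ps. mixture_cov l Y Z)"
    unfolding mixture_cov_add_left[OF X Y Z l]
    by (intro add_mono cSUP_upper l mixture_cov_bdd(1) X Y Z)
qed

lemma lower_cov_add_left_ge: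
  assumes X: "uniformly_L2 Ps X" and Y: "uniformly_L2 Ps Y" and Z: "uniformly_L2 Ps Z"
  shows "lower_cov Ps X Z + lower_cov Ps Y Z \<le> lower_cov Ps (\<lambda>\<omega>. X \<omega> + Y \<omega>) Z"
  unfolding lower_cov_eq_INF_mixture_cov[OF uniformly_L2_add[OF X Y] Z]
    lower_cov_eq_INF_mixture_cov[OF X Z] lower_cov_eq_INF_mixture_cov[OF Y Z]
proof (rule cINF_greatest[OF mixtures_nonempty])
  fix l assume l: "l \<in> mixtures Ps"
  show "(INF l\<in>mixtures Ps. mixture_cov l X Z) + (INF l\<in>mixtures Ps. mixture_cov l Y Z)
      \<le> mixture_cov l (\<lambda>\<omega>. X \<omega> + Y \<omega>) Z"
    unfolding mixture_cov_add_left[OF X Y Z l]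
    by (intro add_mono cINF_lower l mixture_cov_bdd(2) X Y Z)
qed

end

theorem proposition3p7:
  fixes M :: "'a measure" and Ps :: "'a measure set" and X Y Z :: "'a \<Rightarrow> real"
  assumes "Ps \<noteq> {}"
    and "\<forall>P\<in>Ps. prob_space P \<and> sets P = sets M"
    and "X \<in> borel_measurable M" and "Y \<in> borel_measurable M" and "Z \<in> borel_measurable M"
    and "(SUP P\<in>Ps. \<integral>\<^sup>+\<omega>. ennreal ((X \<omega>)\<^sup>2) \<partial>P)
         + (SUP P\<in>Ps. \<integral>\<^sup>+\<omega>. ennreal ((Y \<omega>)\<^sup>2) \<partial>P)
         + (SUP P\<in>Ps. \<integral>\<^sup>+\<omega>. ennreal ((Z \<omega>)\<^sup>2) \<partial>P) < \<infinity>"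
  shows "(upper_cov Ps X Y = upper_cov Ps Y X \<and> lower_cov Ps X Y = lower_cov Ps Y X)
    \<and> (\<forall>a b::real. upper_cov Ps (\<lambda>\<omega>. X \<omega> + a) (\<lambda>\<omega>. Y \<omega> + b) = upper_cov Ps X Y
                \<and> lower_cov Ps (\<lambda>\<omega>. X \<omega> + a) (\<lambda>\<omega>. Y \<omega> + b) = lower_cov Ps X Y)
    \<and> upper_cov Ps (\<lambda>\<omega>. X \<omega> + Y \<omega>) Z \<le> upper_cov Ps X Z + upper_cov Ps Y Z
    \<and> lower_cov Ps (\<lambda>\<omega>. X \<omega> + Y \<omega>) Z \<ge> lower_cov Ps X Z + lower_cov Ps Y Z
    \<and> (\<forall>a b::real. a * b \<ge> 0 \<longrightarrow>
          upper_cov Ps (\<lambda>\<omega>. a * X \<omega>) (\<lambda>\<omega>. b * Y \<omega>) = a * b * upper_cov Ps X Y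
        \<and> lower_cov Ps (\<lambda>\<omega>. a * X \<omega>) (\<lambda>\<omega>. b * Y \<omega>) = a * b * lower_cov Ps X Y)
    \<and> (\<forall>a b::real. a * b \<le> 0 \<longrightarrow>
          upper_cov Ps (\<lambda>\<omega>. a * X \<omega>) (\<lambda>\<omega>. b * Y \<omega>) = a * b * lower_cov Ps X Y)
    \<and> lower_cov Ps X Y = - upper_cov Ps (\<lambda>\<omega>. - X \<omega>) Y
    \<and> lower_cov Ps X Y = - upper_cov Ps X (\<lambda>\<omega>. - Y \<omega>)"
proof -
  interpret prob_family Ps using assms(1,2) unfolding prob_family_def by blast
  have sets: "\<forall>P\<in>Ps. sets P = sets M" using assms(2) by blast
  have X: "uniformly_L2 Ps X" and Y: "uniformly_L2 Ps Y" and Z: "uniformly_L2 Ps Z"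
    using assms(3-6) by (auto intro: uniformly_L2_of_bounded_second_moments[OF sets]
        simp: ennreal_add_less_top)
  have "upper_cov Ps (\<lambda>\<omega>. X \<omega> + a) (\<lambda>\<omega>. Y \<omega> + b) = upper_cov Ps X Y
      \<and> lower_cov Ps (\<lambda>\<omega>. X \<omega> + a) (\<lambda>\<omega>. Y \<omega> + b) = lower_cov Ps X Y" for a b
    using upper_cov_affine[OF X Y, of 1 1 a b] lower_cov_affine[OF X Y, of 1 1 a b] by simp
  moreover have "upper_cov Ps (\<lambda>\<omega>. a * X \<omega>) (\<lambda>\<omega>. b * Y \<omega>) = a * b * upper_cov Ps X Y
      \<and> lower_cov Ps (\<lambda>\<omega>. a * X \<omega>) (\<lambda>\<omega>. b * Y \<omega>) = a * b * lower_cov Ps X Y" if "0 \<le> a * b" for a b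
    using upper_cov_affine[OF X Y that, of 0 0] lower_cov_affine[OF X Y that, of 0 0] by simp
  moreover have "upper_cov Ps (\<lambda>\<omega>. a * X \<omega>) (\<lambda>\<omega>. b * Y \<omega>) = a * b * lower_cov Ps X Y"
    if "a * b \<le> 0" for a b
    using upper_cov_affine_nonpos[OF X Y that, of 0 0] by simp
  moreover have "upper_cov Ps X (\<lambda>\<omega>. - Y \<omega>) = - lower_cov Ps X Y"
    using upper_cov_affine_nonpos[OF X Y, of 1 "- 1" 0 0] by simp
  ultimately show ?thesis
    using upper_cov_commute[OF X Y] lower_cov_commute[OF X Y] upper_cov_add_left_le[OF X Y Z]
      lower_cov_add_left_ge[OF X Y Z] lower_cov_eq_uminus_upper_cov[of Ps X Y]
    by auto
qed

end
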